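(* (1) If $p<m$, an element $w\in G(m,p,n)$ is regular if and only if there is an integer $r\ge1$ such that, with $g=\gcd(r,n)$, $w$ has exactly $g$ cycles, each of length $n/g$ and weight $r/g$ (mod $m$). (2) An element $w\in G(m,m,n)$ is regular if and only if there is an integer $r\ge1$ such that either (i) with $g=\gcd(r,n)$, $w$ has exactly $g$ cycles, each of length $n/g$ and weight $r/g$; or (ii) with $h=\gcd(r,n-1)$, $w$ has exactly $h+1$ cycles, of which $h$ have length $(n-1)/h$ and weight $r/h$, and the remaining one is a $1$-cycle of weight $-r$ (weights taken mod $m$).
   Context: Let $m,p,n$ be positive integers with $p\mid m$ and $\zeta=e^{2\pi i/m}$. $G(m,1,n)$ consists of pairs $w=[u;a]$, $u\in\mathfrak S_n$, $a\in(\mathbb Z/m\mathbb Z)^n$, identified with the monomial matrix with entry $\zeta^{a_i}$ in position $(u(i),i)$; it acts on $\mathbb C^n$. Cycles of $w$ are cycles of $u$ (fixed points included), and the weight of a cycle is the sum of $a_i$ over its elements, in $\mathbb Z/m\mathbb Z$. $G(m,p,n)$ is the subgroup of $w$ with $\sum_i a_i\equiv0\pmod p$. A reflection is an element whose fixed space in $\mathbb C^n$ has codimension $1$. An element $w$ of a complex reflection group $W$ is regular if it has an eigenvector $v\in\mathbb C^n$ that lies on no reflecting hyperplane of $W$ (i.e. $v\notin\operatorname{fix}(t)$ for every reflection $t\in W$). *)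

theory Defs
  imports "HOL-Analysis.Analysis" "HOL-Combinatorics.Orbits"
begin

text \<open>Coordinates of \<open>\<complex>^n\<close> are indexed by a finite type \<open>'n\<close>, with \<open>n = CARD('n)\<close>.\<close>

definition zeta :: "nat \<Rightarrow> complex" where
  "zeta m = exp (2 * of_real pi * \<i> / of_nat m)"

definition mono_mat :: "nat \<Rightarrow> ('n::finite \<Rightarrow> 'n) \<Rightarrow> ('n \<Rightarrow> int) \<Rightarrow> complex^'n^'n" where
  "mono_mat m u a = (\<chi> i j. if i = u j then zeta m powi (a j) else 0)"

definition Gmpn :: "nat \<Rightarrow> nat \<Rightarrow> (complex^'n^'n) set" where
  "Gmpn m p = {mono_mat m u a | (u :: 'n::finite \<Rightarrow> 'n) a.
                 u permutes UNIV \<and> int p dvd (\<Sum>i\<in>UNIV. a i)}"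

definition fixspace :: "complex^'n^'n \<Rightarrow> (complex^'n::finite) set" where
  "fixspace t = {v. t *v v = v}"

definition is_reflection :: "complex^'n^'n \<Rightarrow> bool" where
  "is_reflection t \<longleftrightarrow> vec.dim (fixspace t) + 1 = CARD('n::finite)"

definition regular_in :: "(complex^'n^'n) set \<Rightarrow> complex^'n^'n \<Rightarrow> bool" where
  "regular_in W w \<longleftrightarrow> (\<exists>v::complex^'n::finite. v \<noteq> 0 \<and> (\<exists>c. w *v v = c *s v) \<and>
      (\<forall>t\<in>W. is_reflection t \<longrightarrow> v \<notin> fixspace t))"

definition cycles_of :: "('n \<Rightarrow> 'n) \<Rightarrow> 'n set set" where
  "cycles_of u = (\<lambda>x. orbit u x) ` UNIV"

definition cyc_weight :: "('n \<Rightarrow> int) \<Rightarrow> 'n set \<Rightarrow> int" where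
  "cyc_weight a C = (\<Sum>i\<in>C. a i)"

definition cycle_type_i :: "nat \<Rightarrow> ('n::finite \<Rightarrow> 'n) \<Rightarrow> ('n \<Rightarrow> int) \<Rightarrow> nat \<Rightarrow> bool" where
  "cycle_type_i m u a r \<longleftrightarrow> (let g = gcd r CARD('n) in
     card (cycles_of u) = g \<and>
     (\<forall>C\<in>cycles_of u. card C = CARD('n) div g \<and>
        cyc_weight a C mod int m = (int (r div g)) mod int m))"

definition cycle_type_ii :: "nat \<Rightarrow> ('n::finite \<Rightarrow> 'n) \<Rightarrow> ('n \<Rightarrow> int) \<Rightarrow> nat \<Rightarrow> bool" where
  "cycle_type_ii m u a r \<longleftrightarrow> (let h = gcd r (CARD('n) - 1) in
     card (cycles_of u) = h + 1 \<and>
     (\<exists>x0. {x0} \<in> cycles_of u \<and> cyc_weight a {x0} mod int m = (- int r) mod int m \<and>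
        (\<forall>C\<in>cycles_of u - {{x0}}. card C = (CARD('n) - 1) div h \<and>
           cyc_weight a C mod int m = (int (r div h)) mod int m)))"

end

theory Submission
  imports Defs "HOL-Combinatorics.Cycles"
begin

text \<open>The reflections of \<open>G(m,p,n)\<close> are the elements with reflecting hyperplane
  \<open>x i = \<zeta>^k * x j\<close> and, only when \<open>p < m\<close>, the diagonal ones with hyperplane \<open>x i = 0\<close>. So \<open>v\<close> avoids
  all reflecting hyperplanes iff the powers \<open>v i ^ m\<close> are pairwise distinct and, if \<open>p < m\<close>, no \<open>v i\<close>
  vanishes; in any case at most one coordinate of \<open>v\<close> vanishes.

  An eigenvector \<open>v\<close> of \<open>[u;a]\<close> with eigenvalue \<open>c\<close> satisfies \<open>\<zeta>^(a j) * v j = c * v (u j)\<close>, so along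
  a cycle the \<open>m\<close>-th powers of the coordinates get multiplied by \<open>c^m\<close>. Distinctness of these powers
  forces every cycle meeting the support of \<open>v\<close> to have length \<open>l\<close>, the order of \<open>c^m\<close>; writing
  \<open>c = exp(2\<pi>is/(ml))\<close> with \<open>s\<close> coprime to \<open>l\<close>, going once around a cycle shows that its weight is
  \<open>s\<close> modulo \<open>m\<close>. Conversely, if all cycles through an invariant set \<open>T\<close> have length \<open>l\<close> and weight \<open>s\<close>,
  spreading suitable phases along each cycle and giving different cycles different moduli yields
  such an eigenvector supported on \<open>T\<close>. Full support gives the cycle type (i); support missing a
  single point, necessarily fixed by \<open>u\<close>, gives type (ii), the weight of the fixed point being forced
  by the weight sum being \<open>0\<close> modulo \<open>m\<close>. In both cases \<open>r\<close> is \<open>s\<close> times the number of cycles of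
  length \<open>l\<close>.\<close>

section \<open>Roots of unity\<close>

definition unit_root :: "nat \<Rightarrow> int \<Rightarrow> complex" where
  "unit_root N k = exp (2 * of_real pi * \<i> * of_int k / of_nat N)"

lemma unit_root_0 [simp]: "unit_root N 0 = 1"
  unfolding unit_root_def by simp

lemma unit_root_nonzero [simp]: "unit_root N k \<noteq> 0"
  unfolding unit_root_def by simp

lemma norm_unit_root [simp]: "norm (unit_root N k) = 1"
  unfolding unit_root_def by (simp add: norm_exp_eq_Re)

lemma unit_root_add: "unit_root N (a + b) = unit_root N a * unit_root N b"
  unfolding unit_root_def by (simp add: exp_add[symmetric] add_divide_distrib algebra_simps)

lemma unit_root_power: "unit_root N a ^ t = unit_root N (a * int t)"
  unfolding unit_root_def by (simp add: exp_of_nat_mult[symmetric] algebra_simps)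

lemma unit_root_mult_denom: "0 < M \<Longrightarrow> unit_root (N * M) (a * int M) = unit_root N a"
  unfolding unit_root_def by (simp add: field_simps)

lemma zeta_powi: "zeta m powi k = unit_root m k"
  unfolding zeta_def unit_root_def by (simp add: exp_power_int algebra_simps)

lemma unit_root_eq_1_iff:
  assumes "0 < N"
  shows "unit_root N k = 1 \<longleftrightarrow> int N dvd k"
proof -
  have "unit_root N k = 1 \<longleftrightarrow>
      (\<exists>n::int. 2 * of_real pi * \<i> * of_int k / of_nat N = of_int (2 * n) * pi * \<i>)"
    unfolding unit_root_def using exp_eq[of _ 0] by simp
  also have "\<dots> \<longleftrightarrow> (\<exists>n::int. (of_int k :: complex) = of_nat N * of_int n)"
    using assms by (auto simp: field_simps)
  also have "\<dots> \<longleftrightarrow> int N dvd k"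
    by (metis dvd_def of_int_eq_iff of_int_mult of_int_of_nat_eq)
  finally show ?thesis .
qed

lemma unit_root_eq_iff:
  assumes "0 < N"
  shows "unit_root N a = unit_root N b \<longleftrightarrow> a mod int N = b mod int N"
proof -
  have "unit_root N a = unit_root N (a - b) * unit_root N b"
    by (simp flip: unit_root_add)
  then have "unit_root N a = unit_root N b \<longleftrightarrow> unit_root N (a - b) = 1"
    by auto
  then show ?thesis
    using unit_root_eq_1_iff[OF assms] by (simp add: mod_eq_dvd_iff)
qed

lemma unit_root_power_self: "0 < N \<Longrightarrow> unit_root N k ^ N = 1"
  by (simp add: unit_root_power unit_root_eq_1_iff)

lemma unit_root_mult_power: "0 < N \<Longrightarrow> unit_root (M * N) k ^ N = unit_root M k"
  by (simp add: unit_root_power unit_root_mult_denom)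

lemma unit_root_power_eq_1_iff:
  assumes "0 < m" and "0 < l"
  shows "(unit_root (l * m) (int s) ^ m) ^ k = 1 \<longleftrightarrow> l dvd s * k"
proof -
  have "unit_root (l * m) (int s) ^ m = unit_root l (int s)"
    by (rule unit_root_mult_power[OF assms(1)])
  then show ?thesis
    using unit_root_eq_1_iff[OF assms(2), of "int s * int k"] by (simp add: unit_root_power flip: of_nat_mult)
qed

lemma root_of_unity_eq_unit_root:
  assumes "0 < N" and "z ^ N = 1"
  obtains j :: nat where "z = unit_root N (int j)"
  using assms complex_roots_unity[of N] unfolding unit_root_def by auto

lemma eq_power_imp_unit_root_multiple:
  fixes x y :: complex
  assumes "0 < N" and "x ^ N = y ^ N"
  obtains k where "x = unit_root N k * y"
proof (cases "y = 0")
  case True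
  then show ?thesis
    using assms that[of 0] by (simp add: zero_power)
next
  case False
  then have "(x / y) ^ N = 1"
    using assms by (simp add: power_divide)
  then obtain j where "x / y = unit_root N (int j)"
    using root_of_unity_eq_unit_root[OF assms(1)] by blast
  then show ?thesis
    using that[of "int j"] False by (simp add: field_simps)
qed

section \<open>Orbits of a permutation\<close>

context
  fixes p :: "'a \<Rightarrow> 'a"
  assumes perm: "permutation p"
begin

lemma orbit_eq_set_support: "orbit p a = set (support p a)"
  unfolding support_set[OF perm] orbit_altdef_permutation[OF perm] by blast

lemma card_orbit_eq_least_power: "card (orbit p a) = least_power p a"
  using distinct_card[OF cycle_of_permutation[OF perm]] by (simp add: orbit_eq_set_support)

lemma card_orbit_pos: "0 < card (orbit p a)"
  using least_power_of_permutation(2)[OF perm] by (simp add: card_orbit_eq_least_power)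

lemma funpow_eq_self_iff_dvd: "(p ^^ n) a = a \<longleftrightarrow> card (orbit p a) dvd n"
  using least_power_dvd[OF perm] by (simp add: card_orbit_eq_least_power)

lemma orbit_eq_funpow_image: "orbit p a = (\<lambda>k. (p ^^ k) a) ` {..<card (orbit p a)}"
  unfolding card_orbit_eq_least_power by (simp add: orbit_eq_set_support atLeast_upt)

lemma inj_on_funpow_orbit: "inj_on (\<lambda>k. (p ^^ k) a) {..<card (orbit p a)}"
  using cycle_of_permutation[OF perm]
  unfolding card_orbit_eq_least_power by (simp add: distinct_map atLeast_upt)

lemma funpow_eq_funpow_iff:
  "(p ^^ i) a = (p ^^ j) a \<longleftrightarrow> i mod card (orbit p a) = j mod card (orbit p a)"
proof -
  have "(p ^^ k) a = (p ^^ (k mod card (orbit p a))) a" for k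
    by (rule funpow_mod_eq[symmetric]) (simp add: funpow_eq_self_iff_dvd)
  then show ?thesis
    using inj_onD[OF inj_on_funpow_orbit] card_orbit_pos by (metis lessThan_iff mod_less_divisor)
qed

lemma orbit_eq_if_mem: "b \<in> orbit p a \<Longrightarrow> orbit p b = orbit p a"
  using orbit_cyclic_eq3[OF cyclic_on_orbit'[OF perm]] .

lemma sum_orbit: "sum f (orbit p a) = (\<Sum>k<card (orbit p a). f ((p ^^ k) a))"
proof -
  have "sum f (orbit p a) = sum f ((\<lambda>k. (p ^^ k) a) ` {..<card (orbit p a)})"
    using orbit_eq_funpow_image by simp
  also have "\<dots> = (\<Sum>k<card (orbit p a). f ((p ^^ k) a))"
    using sum.reindex[OF inj_on_funpow_orbit] by simp
  finally show ?thesis .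
qed

lemma disjoint_orbits: "disjoint (range (orbit p))"
proof -
  have "orbit p = (\<lambda>a. set (support p a))"
    using orbit_eq_set_support by blast
  then show ?thesis
    using disjoint_support[OF perm] by simp
qed

end

lemma Union_cycles_of: "permutation u \<Longrightarrow> \<Union> (cycles_of u) = UNIV"
  unfolding cycles_of_def by (blast intro: permutation_self_in_orbit)

lemma pairwise_disjnt_cycles:
  "permutation u \<Longrightarrow> C \<subseteq> cycles_of u \<Longrightarrow> pairwise disjnt C"
  unfolding cycles_of_def using disjoint_orbits by (rule pairwise_subset)

lemma card_Union_cycles:
  fixes u :: "'n::finite \<Rightarrow> 'n"
  assumes "permutation u" and "C \<subseteq> cycles_of u" and "\<And>X. X \<in> C \<Longrightarrow> card X = l"
  shows "card (\<Union> C) = l * card C"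
proof -
  have "card (\<Union> C) = sum card C"
    using pairwise_disjnt_cycles[OF assms(1,2)] by (rule card_Union_disjoint) simp
  then show ?thesis
    using assms(3) by simp
qed

lemma sum_Union_cycles:
  fixes u :: "'n::finite \<Rightarrow> 'n"
  assumes "permutation u" and "C \<subseteq> cycles_of u"
  shows "sum a (\<Union> C) = (\<Sum>X\<in>C. cyc_weight a X)"
  unfolding cyc_weight_def
  using pairwise_disjnt_cycles[OF assms] by (subst sum.Union_disjoint) (auto simp: pairwise_def disjnt_def)

definition path_weight :: "('a \<Rightarrow> 'a) \<Rightarrow> ('a \<Rightarrow> int) \<Rightarrow> 'a \<Rightarrow> nat \<Rightarrow> int" where
  "path_weight u a x k = (\<Sum>t<k. a ((u ^^ t) x))"

lemma path_weight_0 [simp]: "path_weight u a x 0 = 0"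
  by (simp add: path_weight_def)

lemma path_weight_Suc: "path_weight u a x (Suc k) = path_weight u a x k + a ((u ^^ k) x)"
  by (simp add: path_weight_def)

lemma path_weight_add:
  "path_weight u a x (k + l) = path_weight u a x k + path_weight u a ((u ^^ k) x) l"
proof (induct l)
  case (Suc l)
  have "(u ^^ (k + l)) x = (u ^^ l) ((u ^^ k) x)"
    by (simp add: funpow_add add.commute[of k l])
  then show ?case
    using Suc by (simp add: path_weight_Suc)
qed simp

lemma cyc_weight_orbit:
  "permutation u \<Longrightarrow> cyc_weight a (orbit u x) = path_weight u a x (card (orbit u x))"
  unfolding cyc_weight_def path_weight_def by (rule sum_orbit)

section \<open>Eigenvectors of monomial matrices\<close>

lemma mono_mat_mult_vec_apply:
  assumes "bij u"
  shows "(mono_mat m u a *v v) $ (u j) = unit_root m (a j) * v $ j"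
proof -
  have "(mono_mat m u a *v v) $ (u j) = (\<Sum>t\<in>UNIV. if t = j then unit_root m (a t) * v $ t else 0)"
    unfolding matrix_vector_mult_def mono_mat_def zeta_powi vec_lambda_beta
    using bij_is_inj[OF assms] by (intro sum.cong) (auto dest: injD)
  then show ?thesis
    by simp
qed

lemma mono_mat_eigen_iff:
  assumes "bij u"
  shows "mono_mat m u a *v v = c *s v \<longleftrightarrow> (\<forall>j. unit_root m (a j) * v $ j = c * v $ (u j))"
proof -
  have "mono_mat m u a *v v = c *s v \<longleftrightarrow> (\<forall>j. (mono_mat m u a *v v) $ (u j) = c * v $ (u j))"
    using bij_is_surj[OF assms] by (auto simp: vec_eq_iff) (metis surjD)
  then show ?thesis
    by (simp add: mono_mat_mult_vec_apply[OF assms])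
qed

lemma fixspace_mono_mat:
  "bij u \<Longrightarrow> fixspace (mono_mat m u a) = {v. \<forall>j. unit_root m (a j) * v $ j = v $ (u j)}"
  unfolding fixspace_def using mono_mat_eigen_iff[of u m a _ 1] by simp

lemma eigen_funpow:
  assumes "\<And>j. unit_root m (a j) * v $ j = c * v $ (u j)"
  shows "c ^ k * v $ ((u ^^ k) x) = unit_root m (path_weight u a x k) * v $ x"
proof (induct k)
  case (Suc k)
  have "c ^ Suc k * v $ ((u ^^ Suc k) x) = unit_root m (a ((u ^^ k) x)) * (c ^ k * v $ ((u ^^ k) x))"
    using assms[of "(u ^^ k) x"] by simp
  also have "\<dots> = unit_root m (path_weight u a x (Suc k)) * v $ x"
    unfolding Suc path_weight_Suc unit_root_add by simp
  finally show ?case .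
qed simp

lemma eigen_funpow_power:
  assumes "0 < m" and "\<And>j. unit_root m (a j) * v $ j = c * v $ (u j)"
  shows "(c ^ m) ^ k * v $ ((u ^^ k) x) ^ m = v $ x ^ m"
proof -
  have "(c ^ k * v $ ((u ^^ k) x)) ^ m = (unit_root m (path_weight u a x k) * v $ x) ^ m"
    using eigen_funpow[OF assms(2)] by simp
  then show ?thesis
    using unit_root_power_self[OF assms(1)] by (simp add: power_mult_distrib mult.commute[of k m] flip: power_mult)
qed

section \<open>The reflecting hyperplanes of \<open>G(m,p,n)\<close>\<close>

lemma card_Compl_singleton: "card (- {x} :: 'n::finite set) = CARD('n) - 1"
  by (simp add: Compl_eq_Diff_UNIV card_Diff_singleton)

lemma dim_coordinate_hyperplane: "vec.dim {x :: complex^'n::finite. x $ i = 0} + 1 = CARD('n)"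
proof -
  have "vec.dim {x :: complex^'n. x $ i = 0} = vec.dim {x :: complex^'n. \<forall>t. t \<notin> - {i} \<longrightarrow> x $ t = 0}"
    by simp
  also have "\<dots> = card (- {i} :: 'n set)"
    by (rule dim_substandard_cart)
  also have "\<dots> = CARD('n) - 1"
    by (rule card_Compl_singleton)
  finally show ?thesis
    using card_gt_0_iff[of "UNIV :: 'n set"] by simp
qed

lemma dim_hyperplane_coord_eq_mult:
  assumes "i \<noteq> j"
  shows "vec.dim {x :: complex^'n::finite. x $ i = c * x $ j} + 1 = CARD('n)"
proof -
  define g :: "complex^'n \<Rightarrow> complex^'n" where
    "g y = (\<chi> t. if t = i then y $ t + c * y $ j else y $ t)" for y
  define g' :: "complex^'n \<Rightarrow> complex^'n" where
    "g' y = (\<chi> t. if t = i then y $ t - c * y $ j else y $ t)" for y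
  have g'_g: "g' (g y) = y" and g_g': "g (g' y) = y" for y
    using assms by (simp_all add: vec_eq_iff g_def g'_def)
  have "g (x + y) = g x + g y" "g (k *s x) = k *s g x" for k x y
    by (simp_all add: vec_eq_iff g_def algebra_simps)
  then have lin: "Vector_Spaces.linear (*s) (*s) g"
    unfolding Vector_Spaces.linear_iff using vec.vector_space_axioms by blast
  have "g ` {y. y $ i = 0} = {x. x $ i = c * x $ j}"
  proof (intro set_eqI iffI)
    fix x :: "complex^'n" assume "x \<in> {x. x $ i = c * x $ j}"
    then have "g' x \<in> {y. y $ i = 0}"
      by (simp add: g'_def)
    then show "x \<in> g ` {y. y $ i = 0}"
      by (metis g_g' image_eqI)
  qed (use assms in \<open>auto simp: g_def\<close>)
  moreover have "vec.dim (g ` {y. y $ i = 0}) = vec.dim {y :: complex^'n. y $ i = 0}"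
    using g'_g by (intro vec.dim_image_eq[OF lin]) (metis inj_on_inverseI)
  ultimately show ?thesis
    using dim_coordinate_hyperplane[of i] by simp
qed

lemma not_is_reflection_mat_1: "\<not> is_reflection (mat 1 :: complex^'n::finite^'n)"
  unfolding is_reflection_def fixspace_def using vec_dim_card[where 'a = complex and 'n = 'n] by simp

lemma mono_mat_in_Gmpn:
  "u permutes UNIV \<Longrightarrow> int p dvd (\<Sum>i\<in>UNIV. a i) \<Longrightarrow> mono_mat m u a \<in> Gmpn m p"
  unfolding Gmpn_def by blast

lemma diagonal_reflection_in_Gmpn:
  assumes "0 < p" and "p < m"
  obtains t :: "complex^'n::finite^'n"
  where "t \<in> Gmpn m p" "is_reflection t" "fixspace t = {x. x $ i = 0}"
proof
  define d where "d t = (if t = i then int p else 0)" for t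
  have "\<not> int m dvd int p"
    using assms by (auto dest: zdvd_imp_le)
  then have "unit_root m (int p) \<noteq> 1"
    using assms unit_root_eq_1_iff[of m "int p"] by simp
  then have "unit_root m (d t) * x $ t = x $ t \<longleftrightarrow> (t = i \<longrightarrow> x $ t = 0)" for t and x :: "complex^'n"
    by (auto simp: d_def)
  then show fix_eq: "fixspace (mono_mat m id d) = {x :: complex^'n. x $ i = 0}"
    unfolding fixspace_mono_mat[OF bij_id] by auto
  show "mono_mat m id d \<in> Gmpn m p"
    by (rule mono_mat_in_Gmpn) (simp_all add: d_def)
  show "is_reflection (mono_mat m id d)"
    unfolding is_reflection_def fix_eq by (rule dim_coordinate_hyperplane)
qed

lemma transposition_reflection_in_Gmpn:
  assumes "i \<noteq> j"
  obtains t :: "complex^'n::finite^'n"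
  where "t \<in> Gmpn m p" "is_reflection t" "fixspace t = {x. x $ i = unit_root m k * x $ j}"
proof
  define b where "b t = (if t = j then k else if t = i then - k else 0)" for t
  have transp: "Transposition.transpose i j permutes UNIV"
    by (rule permutes_swap_id) simp_all
  have inverse: "unit_root m (- k) * (unit_root m k * z) = z" for z
    by (simp flip: mult.assoc unit_root_add)
  have "(\<forall>t. unit_root m (b t) * x $ t = x $ Transposition.transpose i j t)
      \<longleftrightarrow> x $ i = unit_root m k * x $ j" for x :: "complex^'n"
  proof
    assume "\<forall>t. unit_root m (b t) * x $ t = x $ Transposition.transpose i j t"
    then show "x $ i = unit_root m k * x $ j"
      using assms by (metis b_def transpose_eq_iff)
  next
    assume "x $ i = unit_root m k * x $ j"
    then show "\<forall>t. unit_root m (b t) * x $ t = x $ Transposition.transpose i j t"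
      using assms inverse by (simp add: b_def transpose_def)
  qed
  then show fix_eq:
    "fixspace (mono_mat m (Transposition.transpose i j) b) = {x. x $ i = unit_root m k * x $ j}"
    unfolding fixspace_mono_mat[OF permutes_bij[OF transp]] by blast
  have "(\<Sum>t\<in>UNIV. b t) = (\<Sum>t\<in>UNIV. (if t = j then k else 0) + (if t = i then - k else 0))"
    using assms by (intro sum.cong) (auto simp: b_def)
  then show "mono_mat m (Transposition.transpose i j) b \<in> Gmpn m p"
    by (intro mono_mat_in_Gmpn[OF transp]) (simp add: sum.distrib)
  show "is_reflection (mono_mat m (Transposition.transpose i j) b)"
    unfolding is_reflection_def fix_eq by (rule dim_hyperplane_coord_eq_mult[OF assms])
qed

lemma avoiding_reflections_imp_inj_power:
  fixes v :: "complex^'n::finite"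
  assumes "0 < m" and avoid: "\<And>t. t \<in> Gmpn m p \<Longrightarrow> is_reflection t \<Longrightarrow> v \<notin> fixspace t"
  shows "inj (\<lambda>i. v $ i ^ m)"
proof (rule injI, rule ccontr)
  fix i j assume "v $ i ^ m = v $ j ^ m" and "i \<noteq> j"
  then obtain k where "v $ i = unit_root m k * v $ j"
    using eq_power_imp_unit_root_multiple[OF assms(1)] by metis
  moreover obtain t :: "complex^'n^'n"
    where "t \<in> Gmpn m p" "is_reflection t" "fixspace t = {x. x $ i = unit_root m k * x $ j}"
    using transposition_reflection_in_Gmpn[OF \<open>i \<noteq> j\<close>] .
  ultimately show False
    using avoid by blast
qed

lemma avoiding_reflections_imp_nonzero:
  fixes v :: "complex^'n::finite"
  assumes "0 < p" and "p < m" and avoid: "\<And>t. t \<in> Gmpn m p \<Longrightarrow> is_reflection t \<Longrightarrow> v \<notin> fixspace t"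
  shows "v $ i \<noteq> 0"
proof
  assume "v $ i = 0"
  moreover obtain t :: "complex^'n^'n"
    where "t \<in> Gmpn m p" "is_reflection t" "fixspace t = {x. x $ i = 0}"
    using diagonal_reflection_in_Gmpn[OF assms(1,2)] .
  ultimately show False
    using avoid by blast
qed

lemma mono_mat_fixing_inj_power_imp_id:
  fixes v :: "complex^'n::finite"
  assumes m: "0 < m" and u: "u permutes UNIV" and inj: "inj (\<lambda>i. v $ i ^ m)"
    and "v \<in> fixspace (mono_mat m u a)"
  shows "u = id"
proof
  fix j
  have fix_v: "unit_root m (a j) * v $ j = v $ (u j)"
    using \<open>v \<in> fixspace (mono_mat m u a)\<close> unfolding fixspace_mono_mat[OF permutes_bij[OF u]] by blast
  have "v $ (u j) ^ m = v $ j ^ m"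
    using unit_root_power_self[OF m] by (simp flip: fix_v add: power_mult_distrib)
  then show "u j = id j"
    using injD[OF inj, of "u j" j] by simp
qed

text \<open>A nontrivial diagonal entry of a reflection fixing \<open>v\<close> sits where \<open>v\<close> vanishes, so there is only
  one, and then the weight sum is not divisible by \<open>m\<close>.\<close>
lemma inj_power_imp_avoiding_reflections:
  fixes v :: "complex^'n::finite"
  assumes m: "0 < m" and inj: "inj (\<lambda>i. v $ i ^ m)" and nonzero: "(\<forall>i. v $ i \<noteq> 0) \<or> p = m"
    and "t \<in> Gmpn m p" and "is_reflection t"
  shows "v \<notin> fixspace t"
proof
  assume "v \<in> fixspace t"
  obtain u a where t: "t = mono_mat m u a" and u: "u permutes UNIV"
    and sum_a: "int p dvd (\<Sum>i\<in>UNIV. a i)"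
    using \<open>t \<in> Gmpn m p\<close> unfolding Gmpn_def by blast
  have u_id: "u = id"
    using mono_mat_fixing_inj_power_imp_id[OF m u inj] \<open>v \<in> fixspace t\<close> by (simp add: t)
  have fix_v: "unit_root m (a j) * v $ j = v $ j" for j
    using \<open>v \<in> fixspace t\<close> unfolding t u_id fixspace_mono_mat[OF bij_id] by simp
  have root_1: "unit_root m (a j) = 1" for j
  proof (rule ccontr)
    assume a_j: "unit_root m (a j) \<noteq> 1"
    then have "v $ j = 0"
      using fix_v[of j] by simp
    then have "p = m"
      using nonzero by blast
    have "v $ i \<noteq> 0" if "i \<noteq> j" for i
      using injD[OF inj, of i j] \<open>v $ j = 0\<close> that m by (auto simp: zero_power)
    then have "unit_root m (a i) = 1" if "i \<noteq> j" for i
      using fix_v[of i] that by simp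
    then have "int m dvd (\<Sum>i\<in>UNIV - {j}. a i)"
      using unit_root_eq_1_iff[OF m] by (intro dvd_sum) auto
    moreover have "(\<Sum>i\<in>UNIV. a i) = a j + (\<Sum>i\<in>UNIV - {j}. a i)"
      by (simp add: sum.remove[of UNIV j])
    ultimately have "int m dvd a j"
      using sum_a \<open>p = m\<close> by (metis dvd_add_left_iff)
    then show False
      using a_j unit_root_eq_1_iff[OF m] by simp
  qed
  have "t = mat 1"
    unfolding t u_id mono_mat_def mat_def using root_1 by (simp add: zeta_powi vec_eq_iff)
  then show False
    using \<open>is_reflection t\<close> not_is_reflection_mat_1 by blast
qed

lemma regular_in_Gmpn_iff:
  fixes w :: "complex^'n::finite^'n"
  assumes "0 < p" and "p < m"
  shows "regular_in (Gmpn m p) w \<longleftrightarrow> (\<exists>v c. w *v v = c *s v \<and> inj (\<lambda>i. v $ i ^ m) \<and> (\<forall>i. v $ i \<noteq> 0))"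
proof
  assume "regular_in (Gmpn m p) w"
  then obtain v c where "w *v v = c *s v"
    and avoid: "\<And>t. t \<in> Gmpn m p \<Longrightarrow> is_reflection t \<Longrightarrow> v \<notin> fixspace t"
    unfolding regular_in_def by blast
  moreover have "inj (\<lambda>i. v $ i ^ m)"
    using assms by (intro avoiding_reflections_imp_inj_power[OF _ avoid]) simp
  ultimately show "\<exists>v c. w *v v = c *s v \<and> inj (\<lambda>i. v $ i ^ m) \<and> (\<forall>i. v $ i \<noteq> 0)"
    using avoiding_reflections_imp_nonzero[OF assms avoid] by blast
next
  assume "\<exists>v c. w *v v = c *s v \<and> inj (\<lambda>i. v $ i ^ m) \<and> (\<forall>i. v $ i \<noteq> 0)"
  then obtain v c where "w *v v = c *s v" and "inj (\<lambda>i. v $ i ^ m)" and "\<forall>i. v $ i \<noteq> 0"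
    by blast
  moreover from this have "v \<noteq> 0"
    by (metis zero_index)
  ultimately show "regular_in (Gmpn m p) w"
    unfolding regular_in_def using inj_power_imp_avoiding_reflections[of m v] assms(2) by auto
qed

lemma regular_in_Gmmn_iff:
  fixes w :: "complex^'n::finite^'n"
  assumes "0 < m"
  shows "regular_in (Gmpn m m) w \<longleftrightarrow>
    (\<exists>v c. w *v v = c *s v \<and> inj (\<lambda>i. v $ i ^ m) \<and> (\<forall>i. v $ i \<noteq> 0)) \<or>
    (\<exists>v c x0. w *v v = c *s v \<and> inj (\<lambda>i. v $ i ^ m) \<and> v \<noteq> 0 \<and> v $ x0 = 0)"
proof -
  have "regular_in (Gmpn m m) w \<longleftrightarrow> (\<exists>v c. w *v v = c *s v \<and> inj (\<lambda>i. v $ i ^ m) \<and> v \<noteq> 0)"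
    unfolding regular_in_def
    using avoiding_reflections_imp_inj_power[OF assms] inj_power_imp_avoiding_reflections[OF assms]
    by blast
  also have "\<dots> \<longleftrightarrow> (\<exists>v c. w *v v = c *s v \<and> inj (\<lambda>i. v $ i ^ m) \<and> (\<forall>i. v $ i \<noteq> 0)) \<or>
      (\<exists>v c x0. w *v v = c *s v \<and> inj (\<lambda>i. v $ i ^ m) \<and> v \<noteq> 0 \<and> v $ x0 = 0)"
    by (metis zero_index)
  finally show ?thesis .
qed

section \<open>Eigenvectors and cycles of equal length and weight\<close>

lemma coprime_if_dvd_mult_imp_dvd:
  fixes s l :: nat
  assumes "0 < l" and "\<And>k. l dvd s * k \<Longrightarrow> l dvd k"
  shows "coprime s l"
proof -
  have "l dvd s * (l div gcd s l)"
    by (metis div_mult_swap dvd_div_mult dvd_mult_right dvd_refl gcd.commute gcd_dvd2)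
  then have "l dvd l div gcd s l"
    by (rule assms(2))
  then have "gcd s l = 1"
    by (metis assms(1) dvd_div_eq_0_iff dvd_mult_cancel2 dvd_mult_div_cancel gcd_dvd2 not_gr_zero)
  then show ?thesis
    by (simp add: coprime_iff_gcd_eq_1)
qed

text \<open>The parameter \<open>s\<close> encodes the eigenvalue \<open>exp(2\<pi>is/(ml))\<close> of the corresponding eigenvectors.\<close>
definition uniform_cycles :: "nat \<Rightarrow> ('a \<Rightarrow> 'a) \<Rightarrow> ('a \<Rightarrow> int) \<Rightarrow> 'a set \<Rightarrow> nat \<Rightarrow> nat \<Rightarrow> bool" where
  "uniform_cycles m u a T l s \<longleftrightarrow> 0 < l \<and> coprime s l \<and>
     (\<forall>j\<in>T. card (orbit u j) = l \<and> cyc_weight a (orbit u j) mod int m = int s mod int m)"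

lemma eigen_support_funpow_eq_self_iff:
  assumes "0 < m" and eig: "\<And>j. unit_root m (a j) * v $ j = c * v $ (u j)"
    and inj: "inj_on (\<lambda>i. v $ i ^ m) {j. v $ j \<noteq> 0}" and "v $ j \<noteq> 0"
  shows "(u ^^ k) j = j \<longleftrightarrow> (c ^ m) ^ k = 1"
proof -
  have "c ^ k * v $ ((u ^^ k) j) \<noteq> 0"
    using eigen_funpow[OF eig, of k j] \<open>v $ j \<noteq> 0\<close> by simp
  then have "v $ ((u ^^ k) j) \<noteq> 0"
    by auto
  moreover have "(c ^ m) ^ k * v $ ((u ^^ k) j) ^ m = v $ j ^ m"
    using eigen_funpow_power[OF assms(1) eig] .
  ultimately show ?thesis
    using \<open>v $ j \<noteq> 0\<close> inj_onD[OF inj, of "(u ^^ k) j" j] by auto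
qed

lemma eigenvector_imp_uniform_cycles:
  fixes u :: "'n::finite \<Rightarrow> 'n" and v :: "complex^'n"
  assumes m: "0 < m" and u: "permutation u"
    and eig: "\<And>j. unit_root m (a j) * v $ j = c * v $ (u j)"
    and inj: "inj_on (\<lambda>i. v $ i ^ m) {j. v $ j \<noteq> 0}" and "v $ x \<noteq> 0"
  obtains l s where "uniform_cycles m u a {j. v $ j \<noteq> 0} l s"
proof -
  note period = eigen_support_funpow_eq_self_iff[OF m eig inj]
  define l where "l = card (orbit u x)"
  have l: "0 < l"
    using card_orbit_pos[OF u] by (simp add: l_def)
  have "(u ^^ l) x = x"
    using funpow_eq_self_iff_dvd[OF u] by (simp add: l_def)
  then have "(c ^ m) ^ l = 1"
    using period[OF \<open>v $ x \<noteq> 0\<close>] by simp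
  then have "c ^ (l * m) = 1"
    by (metis mult.commute power_mult)
  then obtain s where c: "c = unit_root (l * m) (int s)"
    using root_of_unity_eq_unit_root[of "l * m" c] m l by auto
  have dvd_iff: "card (orbit u j) dvd k \<longleftrightarrow> l dvd s * k" if "v $ j \<noteq> 0" for j k
    using period[OF that] funpow_eq_self_iff_dvd[OF u] unit_root_power_eq_1_iff[OF m l] by (simp add: c)
  have coprime: "coprime s l"
    using dvd_iff[OF \<open>v $ x \<noteq> 0\<close>] by (intro coprime_if_dvd_mult_imp_dvd[OF l]) (simp add: l_def)
  have card: "card (orbit u j) = l" if "v $ j \<noteq> 0" for j
    using dvd_iff[OF that] coprime_dvd_mult_right_iff[of l s] coprime
    by (metis coprime_commute dvd_antisym dvd_refl)
  have "cyc_weight a (orbit u j) mod int m = int s mod int m" if "v $ j \<noteq> 0" for j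
  proof -
    have "(u ^^ l) j = j"
      using funpow_eq_self_iff_dvd[OF u] card[OF that] by simp
    then have "unit_root m (int s) * v $ j = unit_root m (path_weight u a j l) * v $ j"
      using eigen_funpow[OF eig, of l j] unit_root_mult_power[OF l, of m] by (simp add: c mult.commute[of l m])
    then show ?thesis
      using that unit_root_eq_iff[OF m] cyc_weight_orbit[OF u] card by simp
  qed
  then show thesis
    using that[of l s] l coprime card unfolding uniform_cycles_def by blast
qed

definition cycle_phase :: "nat \<Rightarrow> nat \<Rightarrow> nat \<Rightarrow> ('a \<Rightarrow> 'a) \<Rightarrow> ('a \<Rightarrow> int) \<Rightarrow> 'a \<Rightarrow> nat \<Rightarrow> complex" where
  "cycle_phase m l s u a x k = unit_root (m * l) (- int s * int k) * unit_root m (path_weight u a x k)"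

lemma norm_cycle_phase [simp]: "norm (cycle_phase m l s u a x k) = 1"
  by (simp add: cycle_phase_def norm_mult)

lemma cycle_phase_Suc:
  "cycle_phase m l s u a x (Suc k) =
     unit_root (m * l) (- int s) * unit_root m (a ((u ^^ k) x)) * cycle_phase m l s u a x k"
proof -
  have "unit_root (m * l) (- int s * int (Suc k)) = unit_root (m * l) (- int s) * unit_root (m * l) (- int s * int k)"
    by (simp add: algebra_simps flip: unit_root_add)
  then show ?thesis
    unfolding cycle_phase_def path_weight_Suc unit_root_add[of m] by (simp add: ac_simps)
qed

context
  fixes m l s :: nat and u :: "'a \<Rightarrow> 'a" and a x
  assumes m: "0 < m" and u: "permutation u" and card: "card (orbit u x) = l"
    and weight: "cyc_weight a (orbit u x) mod int m = int s mod int m"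
begin

lemma cycle_phase_add_period: "cycle_phase m l s u a x (k + l) = cycle_phase m l s u a x k"
proof -
  have l: "0 < l"
    using card card_orbit_pos[OF u, of x] by simp
  have "orbit u ((u ^^ k) x) = orbit u x"
    by (rule orbit_eq_if_mem[OF u funpow_in_orbit[OF permutation_self_in_orbit[OF u]]])
  then have "unit_root m (path_weight u a ((u ^^ k) x) l) = unit_root m (int s)"
    using cyc_weight_orbit[OF u, of a "(u ^^ k) x"] card weight unit_root_eq_iff[OF m] by simp
  moreover have "unit_root (m * l) (- int s * int l) = unit_root m (- int s)"
    by (rule unit_root_mult_denom[OF l])
  moreover have "unit_root m (- int s) * unit_root m (int s) = 1"
    by (simp flip: unit_root_add)
  ultimately have "unit_root (m * l) (- int s * int l) * unit_root m (path_weight u a ((u ^^ k) x) l) = 1"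
    by (simp add: mult.commute)
  moreover have "cycle_phase m l s u a x (k + l) = cycle_phase m l s u a x k *
      (unit_root (m * l) (- int s * int l) * unit_root m (path_weight u a ((u ^^ k) x) l))"
    unfolding cycle_phase_def path_weight_add by (simp add: algebra_simps flip: unit_root_add)
  ultimately show ?thesis
    by simp
qed

lemma cycle_phase_cong:
  assumes "(u ^^ i) x = (u ^^ j) x"
  shows "cycle_phase m l s u a x i = cycle_phase m l s u a x j"
proof -
  have periodic: "cycle_phase m l s u a x (r + q * l) = cycle_phase m l s u a x r" for r q
  proof (induct q)
    case (Suc q)
    have "r + Suc q * l = (r + q * l) + l"
      by simp
    then show ?case
      by (simp only: cycle_phase_add_period Suc)
  qed simp
  have "i mod l = j mod l"
    using assms funpow_eq_funpow_iff[OF u] card by simp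
  then show ?thesis
    using periodic[of "i mod l" "i div l"] periodic[of "j mod l" "j div l"] by (metis mod_div_mult_eq)
qed

end

text \<open>Measure the phase of \<open>j\<close> from a base point chosen on its cycle; this is well defined because
  \<open>cycle_phase\<close> is periodic with the period \<open>l\<close> of the cycle.\<close>
lemma uniform_cycles_imp_phases:
  fixes u :: "'n::finite \<Rightarrow> 'n"
  assumes m: "0 < m" and u: "permutation u" and U: "uniform_cycles m u a T l s"
  obtains \<phi> :: "'n \<Rightarrow> complex" where "\<And>j. norm (\<phi> j) = 1"
    and "\<And>j. j \<in> T \<Longrightarrow> unit_root m (a j) * \<phi> j = unit_root (m * l) (int s) * \<phi> (u j)"
proof
  define base where "base j = (SOME y. y \<in> orbit u j)" for j
  have orbit_base: "orbit u (base j) = orbit u j" for j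
    unfolding base_def using permutation_self_in_orbit[OF u] by (metis someI orbit_eq_if_mem[OF u])
  have base_u: "base (u j) = base j" for j
    unfolding base_def permutation_orbit_step[OF u] ..
  define shift where "shift j = (SOME k. (u ^^ k) (base j) = j)" for j
  have shift: "(u ^^ shift j) (base j) = j" for j
  proof -
    have "j \<in> orbit u (base j)"
      using orbit_base permutation_self_in_orbit[OF u] by simp
    then obtain k where "(u ^^ k) (base j) = j"
      by (metis imageE orbit_eq_funpow_image[OF u])
    then show ?thesis
      unfolding shift_def by (rule someI)
  qed
  define \<phi> where "\<phi> j = cycle_phase m l s u a (base j) (shift j)" for j
  show "norm (\<phi> j) = 1" for j
    by (simp add: \<phi>_def)
  fix j assume "j \<in> T"
  then have "card (orbit u (base j)) = l \<and> cyc_weight a (orbit u (base j)) mod int m = int s mod int m"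
    using U unfolding uniform_cycles_def orbit_base by blast
  moreover have "(u ^^ shift (u j)) (base j) = (u ^^ Suc (shift j)) (base j)"
    using shift[of "u j"] shift[of j] base_u by simp
  ultimately have "\<phi> (u j) = cycle_phase m l s u a (base j) (Suc (shift j))"
    unfolding \<phi>_def base_u using cycle_phase_cong[OF m u] by blast
  also have "\<dots> = unit_root (m * l) (- int s) * unit_root m (a j) * \<phi> j"
    unfolding cycle_phase_Suc shift \<phi>_def ..
  finally show "unit_root m (a j) * \<phi> j = unit_root (m * l) (int s) * \<phi> (u j)"
    by (simp add: mult.assoc[symmetric] flip: unit_root_add)
qed

lemma uniform_cycles_eigen_power_eq_imp_eq:
  fixes u :: "'n::finite \<Rightarrow> 'n"
  assumes m: "0 < m" and u: "permutation u" and U: "uniform_cycles m u a T l s" and "j \<in> T"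
    and eig: "\<And>j. unit_root m (a j) * v $ j = unit_root (m * l) (int s) * v $ (u j)"
    and "v $ ((u ^^ k) j) \<noteq> 0" and pow: "v $ ((u ^^ k) j) ^ m = v $ j ^ m"
  shows "(u ^^ k) j = j"
proof -
  have "(unit_root (m * l) (int s) ^ m) ^ k * v $ ((u ^^ k) j) ^ m = v $ ((u ^^ k) j) ^ m"
    using eigen_funpow_power[OF m eig, of k j] pow by simp
  then have "(unit_root (m * l) (int s) ^ m) ^ k = 1"
    using \<open>v $ ((u ^^ k) j) \<noteq> 0\<close> by simp
  then have "l dvd s * k"
    using unit_root_power_eq_1_iff[OF m, of l s k] U by (simp add: uniform_cycles_def mult.commute)
  then have "card (orbit u j) dvd k"
    using U \<open>j \<in> T\<close> unfolding uniform_cycles_def by (simp add: coprime_commute coprime_dvd_mult_right_iff)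
  then show ?thesis
    using funpow_eq_self_iff_dvd[OF u] by simp
qed

text \<open>The moduli \<open>Suc (to_nat (orbit u j))\<close> separate the cycles, and on a single cycle the \<open>m\<close>-th powers of
  the coordinates differ by powers of \<open>c\<^sup>m\<close>, a primitive \<open>l\<close>-th root of unity.\<close>
lemma uniform_cycles_imp_eigenvector:
  fixes u :: "'n::finite \<Rightarrow> 'n"
  assumes m: "0 < m" and u: "permutation u" and U: "uniform_cycles m u a T l s"
    and T: "\<And>j. u j \<in> T \<longleftrightarrow> j \<in> T"
  obtains v :: "complex^'n" and c where "\<And>j. unit_root m (a j) * v $ j = c * v $ (u j)"
    and "{j. v $ j \<noteq> 0} = T" and "inj_on (\<lambda>i. v $ i ^ m) T"
proof -
  obtain \<phi> :: "'n \<Rightarrow> complex" where norm_\<phi>: "\<And>j. norm (\<phi> j) = 1"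
    and eig_\<phi>: "\<And>j. j \<in> T \<Longrightarrow> unit_root m (a j) * \<phi> j = unit_root (m * l) (int s) * \<phi> (u j)"
    using uniform_cycles_imp_phases[OF m u U] by blast
  define v :: "complex^'n" where "v = (\<chi> j. if j \<in> T then of_nat (Suc (to_nat (orbit u j))) * \<phi> j else 0)"
  have v_apply: "v $ j = (if j \<in> T then of_nat (Suc (to_nat (orbit u j))) * \<phi> j else 0)" for j
    by (simp add: v_def)
  have norm_v: "norm (v $ j) = Suc (to_nat (orbit u j))" if "j \<in> T" for j
    using that by (simp add: v_apply norm_mult norm_\<phi> del: of_nat_Suc)
  have eig: "unit_root m (a j) * v $ j = unit_root (m * l) (int s) * v $ (u j)" for j
    using eig_\<phi>[of j] T[of j] by (auto simp: v_apply permutation_orbit_step[OF u] algebra_simps)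
  have "v $ j \<noteq> 0" if "j \<in> T" for j
    using norm_v[OF that] by auto
  then have support: "{j. v $ j \<noteq> 0} = T"
    by (auto simp: v_apply)
  have "inj_on (\<lambda>i. v $ i ^ m) T"
  proof (rule inj_onI)
    fix i j assume "i \<in> T" "j \<in> T" and pow: "v $ i ^ m = v $ j ^ m"
    then have "norm (v $ i) = norm (v $ j)"
      using m by (metis norm_ge_zero norm_power power_eq_imp_eq_base)
    then have "orbit u i = orbit u j"
      using norm_v \<open>i \<in> T\<close> \<open>j \<in> T\<close> by simp
    then obtain k where i: "i = (u ^^ k) j"
      using permutation_self_in_orbit[OF u, of i] orbit_altdef_permutation[OF u] by auto
    have "v $ i \<noteq> 0"
      using support \<open>i \<in> T\<close> by blast
    then show "i = j"
      using uniform_cycles_eigen_power_eq_imp_eq[OF m u U \<open>j \<in> T\<close> eig] pow by (simp add: i)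
  qed
  then show thesis
    using that eig support by blast
qed

lemma full_support_eigenvector_iff:
  fixes u :: "'n::finite \<Rightarrow> 'n"
  assumes m: "0 < m" and u: "permutation u"
  shows "(\<exists>(v :: complex^'n) c. mono_mat m u a *v v = c *s v \<and> inj (\<lambda>i. v $ i ^ m) \<and> (\<forall>i. v $ i \<noteq> 0))
    \<longleftrightarrow> (\<exists>l s. uniform_cycles m u a UNIV l s)"
proof
  assume "\<exists>(v :: complex^'n) c. mono_mat m u a *v v = c *s v \<and> inj (\<lambda>i. v $ i ^ m) \<and> (\<forall>i. v $ i \<noteq> 0)"
  then obtain v :: "complex^'n" and c where "mono_mat m u a *v v = c *s v"
    and inj: "inj (\<lambda>i. v $ i ^ m)" and nonzero: "\<forall>i. v $ i \<noteq> 0"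
    by blast
  then have eig: "unit_root m (a j) * v $ j = c * v $ (u j)" for j
    using mono_mat_eigen_iff[OF permutation_bijective[OF u]] by blast
  have "{j. v $ j \<noteq> 0} = UNIV"
    using nonzero by blast
  then show "\<exists>l s. uniform_cycles m u a UNIV l s"
    using eigenvector_imp_uniform_cycles[OF m u eig inj_on_subset[OF inj subset_UNIV]] nonzero
    by metis
next
  assume "\<exists>l s. uniform_cycles m u a UNIV l s"
  then obtain l s where U: "uniform_cycles m u a UNIV l s"
    by blast
  obtain v :: "complex^'n" and c where "\<And>j. unit_root m (a j) * v $ j = c * v $ (u j)"
    and "{j. v $ j \<noteq> 0} = UNIV" and "inj_on (\<lambda>i. v $ i ^ m) UNIV"
    by (rule uniform_cycles_imp_eigenvector[OF m u U]) blast+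
  then show "\<exists>(v :: complex^'n) c. mono_mat m u a *v v = c *s v \<and> inj (\<lambda>i. v $ i ^ m) \<and> (\<forall>i. v $ i \<noteq> 0)"
    using mono_mat_eigen_iff[OF permutation_bijective[OF u]] by blast
qed

lemma inj_power_vanishing_coordinate_iff:
  fixes v :: "complex^'n::finite"
  assumes m: "0 < m" and "v $ x0 = 0"
  shows "inj (\<lambda>i. v $ i ^ m) \<longleftrightarrow> {j. v $ j \<noteq> 0} = - {x0} \<and> inj_on (\<lambda>i. v $ i ^ m) (- {x0})"
proof
  assume inj: "inj (\<lambda>i. v $ i ^ m)"
  have "v $ j \<noteq> 0" if "j \<noteq> x0" for j
    using injD[OF inj, of j x0] \<open>v $ x0 = 0\<close> that m by (auto simp: zero_power)
  then show "{j. v $ j \<noteq> 0} = - {x0} \<and> inj_on (\<lambda>i. v $ i ^ m) (- {x0})"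
    using \<open>v $ x0 = 0\<close> inj_on_subset[OF inj subset_UNIV] by auto
next
  assume "{j. v $ j \<noteq> 0} = - {x0} \<and> inj_on (\<lambda>i. v $ i ^ m) (- {x0})"
  then have support: "{j. v $ j \<noteq> 0} = - {x0}" and inj_on: "inj_on (\<lambda>i. v $ i ^ m) (- {x0})"
    by blast+
  show "inj (\<lambda>i. v $ i ^ m)"
  proof (rule injI)
    fix i j assume pow: "v $ i ^ m = v $ j ^ m"
    then have "v $ i = 0 \<longleftrightarrow> v $ j = 0"
      using m by (auto simp: zero_power)
    then show "i = j"
      using support inj_onD[OF inj_on pow] by blast
  qed
qed

lemma eigen_vanishing_coordinate_fixed:
  assumes eig: "\<And>j. unit_root m (a j) * v $ j = c * v $ (u j)"
    and support: "{j. v $ j \<noteq> 0} = - {x0}" and "v $ x1 \<noteq> 0"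
  shows "u x0 = x0"
proof -
  have "c \<noteq> 0"
    using eig[of x1] \<open>v $ x1 \<noteq> 0\<close> by auto
  moreover have "v $ x0 = 0"
    using support by blast
  ultimately have "v $ (u x0) = 0"
    using eig[of x0] by simp
  then show ?thesis
    using support by blast
qed

lemma fixed_point_support_eigenvector_iff:
  fixes u :: "'n::finite \<Rightarrow> 'n"
  assumes m: "0 < m" and u: "permutation u"
  shows "(\<exists>(v :: complex^'n) c x0. mono_mat m u a *v v = c *s v \<and> inj (\<lambda>i. v $ i ^ m) \<and> v \<noteq> 0 \<and> v $ x0 = 0)
    \<longleftrightarrow> (\<exists>x0 l s. u x0 = x0 \<and> - {x0} \<noteq> {} \<and> uniform_cycles m u a (- {x0}) l s)"
proof
  assume "\<exists>(v :: complex^'n) c x0. mono_mat m u a *v v = c *s v \<and> inj (\<lambda>i. v $ i ^ m) \<and> v \<noteq> 0 \<and> v $ x0 = 0"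
  then obtain v :: "complex^'n" and c x0 where "mono_mat m u a *v v = c *s v"
    and inj: "inj (\<lambda>i. v $ i ^ m)" and "v \<noteq> 0" and "v $ x0 = 0"
    by blast
  then have eig: "unit_root m (a j) * v $ j = c * v $ (u j)" for j
    using mono_mat_eigen_iff[OF permutation_bijective[OF u]] by blast
  have support: "{j. v $ j \<noteq> 0} = - {x0}"
    using inj inj_power_vanishing_coordinate_iff[OF m \<open>v $ x0 = 0\<close>] by blast
  obtain x1 where "v $ x1 \<noteq> 0"
    using \<open>v \<noteq> 0\<close> by (auto simp: vec_eq_iff)
  then have "u x0 = x0"
    using eigen_vanishing_coordinate_fixed[OF eig support] by blast
  moreover have "- {x0} \<noteq> {}"
    using \<open>v $ x1 \<noteq> 0\<close> support by blast
  moreover obtain l s where "uniform_cycles m u a (- {x0}) l s"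
    using eigenvector_imp_uniform_cycles[OF m u eig inj_on_subset[OF inj subset_UNIV] \<open>v $ x1 \<noteq> 0\<close>]
    unfolding support .
  ultimately show "\<exists>x0 l s. u x0 = x0 \<and> - {x0} \<noteq> {} \<and> uniform_cycles m u a (- {x0}) l s"
    by blast
next
  assume "\<exists>x0 l s. u x0 = x0 \<and> - {x0} \<noteq> {} \<and> uniform_cycles m u a (- {x0}) l s"
  then obtain x0 l s where "u x0 = x0" and "- {x0} \<noteq> {}" and U: "uniform_cycles m u a (- {x0}) l s"
    by blast
  have "u j = u x0 \<longleftrightarrow> j = x0" for j
    using bij_is_inj[OF permutation_bijective[OF u]] by (auto dest: injD)
  then have "u j \<in> - {x0} \<longleftrightarrow> j \<in> - {x0}" for j
    using \<open>u x0 = x0\<close> by simp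
  then obtain v :: "complex^'n" and c where eig: "\<And>j. unit_root m (a j) * v $ j = c * v $ (u j)"
    and support: "{j. v $ j \<noteq> 0} = - {x0}" and inj_on: "inj_on (\<lambda>i. v $ i ^ m) (- {x0})"
    by (rule uniform_cycles_imp_eigenvector[OF m u U]) blast+
  have "v $ x0 = 0"
    using support by blast
  moreover have "inj (\<lambda>i. v $ i ^ m)"
    using inj_power_vanishing_coordinate_iff[OF m \<open>v $ x0 = 0\<close>] support inj_on by blast
  moreover have "v \<noteq> 0"
    using support \<open>- {x0} \<noteq> {}\<close> by (auto simp: vec_eq_iff)
  ultimately show "\<exists>(v :: complex^'n) c x0. mono_mat m u a *v v = c *s v \<and> inj (\<lambda>i. v $ i ^ m) \<and> v \<noteq> 0 \<and> v $ x0 = 0"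
    using eig mono_mat_eigen_iff[OF permutation_bijective[OF u]] by blast
qed

section \<open>Cycle types\<close>

text \<open>Replacing \<open>s\<close> by \<open>s + ml\<close> keeps its residue and its coprimality to \<open>l\<close>, and makes \<open>r\<close> positive
  also when \<open>s = 0\<close>.\<close>
lemma cycle_type_parameter:
  fixes m l h s :: nat
  assumes "0 < m" and "0 < l" and "0 < h" and "coprime s l"
  obtains r where "1 \<le> r" and "gcd r (l * h) = h" and "int (r div h) mod int m = int s mod int m"
    and "int r mod int m = int (h * s) mod int m"
proof
  let ?r = "(s + m * l) * h"
  have "coprime (s + m * l) l"
    using assms(4) by (simp add: coprime_iff_gcd_eq_1 gcd.commute[of _ l] gcd_add_mult add.commute[of s])
  then show "gcd ?r (l * h) = h"
    by (simp add: gcd_mult_distrib_nat[symmetric] mult.commute coprime_iff_gcd_eq_1)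
  show "1 \<le> ?r"
    using assms(1-3) by (simp add: Suc_le_eq)
  show "int (?r div h) mod int m = int s mod int m"
    using assms(3) by simp
  have "int ?r = int (h * s) + int (h * l) * int m"
    by (simp add: algebra_simps)
  then show "int ?r mod int m = int (h * s) mod int m"
    by simp
qed

lemma cycle_type_parameter_coprime:
  fixes r N :: nat
  assumes "1 \<le> r" and "0 < N"
  shows "0 < N div gcd r N" and "coprime (r div gcd r N) (N div gcd r N)"
proof -
  have "gcd r N \<le> N"
    using assms(2) by (simp add: gcd_le2_nat)
  then show "0 < N div gcd r N"
    using assms by (simp add: div_greater_zero_iff)
  show "coprime (r div gcd r N) (N div gcd r N)"
    using assms(1) by (intro div_gcd_coprime) simp
qed

lemma uniform_cycles_card_sum:
  fixes u :: "'n::finite \<Rightarrow> 'n"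
  assumes u: "permutation u" and U: "uniform_cycles m u a T l s"
    and C: "C \<subseteq> cycles_of u" and T: "\<Union> C = T"
  shows "card T = l * card C" and "sum a T mod int m = int (card C * s) mod int m"
proof -
  have cycle: "card X = l \<and> cyc_weight a X mod int m = int s mod int m" if "X \<in> C" for X
  proof -
    obtain y where y: "X = orbit u y"
      using C \<open>X \<in> C\<close> unfolding cycles_of_def by blast
    then have "y \<in> T"
      using permutation_self_in_orbit[OF u] T \<open>X \<in> C\<close> by blast
    then show ?thesis
      using U y unfolding uniform_cycles_def by blast
  qed
  show "card T = l * card C"
    using card_Union_cycles[OF u C] cycle T by blast
  have "sum a T mod int m = (\<Sum>X\<in>C. cyc_weight a X mod int m) mod int m"
    using sum_Union_cycles[OF u C] T by (simp add: mod_sum_eq)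
  also have "\<dots> = (int (card C) * (int s mod int m)) mod int m"
    using cycle by simp
  finally show "sum a T mod int m = int (card C * s) mod int m"
    by (simp add: mod_mult_right_eq)
qed

lemma cycle_type_i_iff_uniform_cycles:
  fixes u :: "'n::finite \<Rightarrow> 'n"
  assumes m: "0 < m" and u: "permutation u"
  shows "(\<exists>r. r \<ge> 1 \<and> cycle_type_i m u a r) \<longleftrightarrow> (\<exists>l s. uniform_cycles m u a UNIV l s)"
proof
  assume "\<exists>r. r \<ge> 1 \<and> cycle_type_i m u a r"
  then obtain r where "1 \<le> r" and "cycle_type_i m u a r"
    by blast
  then have "uniform_cycles m u a UNIV (CARD('n) div gcd r CARD('n)) (r div gcd r CARD('n))"
    using cycle_type_parameter_coprime[of r "CARD('n)"]
    unfolding cycle_type_i_def uniform_cycles_def cycles_of_def Let_def by simp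
  then show "\<exists>l s. uniform_cycles m u a UNIV l s"
    by blast
next
  assume "\<exists>l s. uniform_cycles m u a UNIV l s"
  then obtain l s where U: "uniform_cycles m u a UNIV l s"
    by blast
  define h where "h = card (cycles_of u)"
  have n: "CARD('n) = l * h"
    using uniform_cycles_card_sum(1)[OF u U order_refl Union_cycles_of[OF u]] by (simp add: h_def)
  have l: "0 < l" and "coprime s l"
    using U by (simp_all add: uniform_cycles_def)
  moreover have "0 < h"
    using n by (cases h) simp_all
  ultimately obtain r where "1 \<le> r" "gcd r (l * h) = h" "int (r div h) mod int m = int s mod int m"
    using cycle_type_parameter[OF m l \<open>0 < h\<close> \<open>coprime s l\<close>] by blast
  moreover have "CARD('n) div h = l"
    using n \<open>0 < h\<close> by simp
  ultimately have "cycle_type_i m u a r"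
    using U n unfolding cycle_type_i_def uniform_cycles_def cycles_of_def Let_def h_def by auto
  then show "\<exists>r. r \<ge> 1 \<and> cycle_type_i m u a r"
    using \<open>1 \<le> r\<close> by blast
qed

lemma cycles_of_fixed_point:
  fixes u :: "'n::finite \<Rightarrow> 'n"
  assumes u: "permutation u" and x0: "u x0 = x0"
  shows "cycles_of u = insert {x0} (orbit u ` (- {x0}))" and "{x0} \<notin> orbit u ` (- {x0})"
    and "\<Union> (orbit u ` (- {x0})) = - {x0}"
proof -
  have orbit_x0: "orbit u x0 = {x0}"
    using x0 orbit_eq_singleton_iff by metis
  have orbit_ne: "orbit u y \<noteq> {x0}" if "y \<noteq> x0" for y
    using permutation_self_in_orbit[OF u, of y] that by auto
  show "cycles_of u = insert {x0} (orbit u ` (- {x0}))"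
    unfolding cycles_of_def using orbit_x0 by auto
  show "{x0} \<notin> orbit u ` (- {x0})"
    using orbit_ne by auto
  have "x0 \<notin> orbit u y" if "y \<noteq> x0" for y
    using orbit_eq_if_mem[OF u] orbit_x0 orbit_ne[OF that] by metis
  then show "\<Union> (orbit u ` (- {x0})) = - {x0}"
    using permutation_self_in_orbit[OF u] by blast
qed

lemma cycle_type_ii_imp_uniform_cycles:
  fixes u :: "'n::finite \<Rightarrow> 'n"
  assumes u: "permutation u" and r: "1 \<le> r" and T: "cycle_type_ii m u a r"
  defines "h \<equiv> gcd r (CARD('n) - 1)"
  obtains x0 where "u x0 = x0" and "- {x0} \<noteq> {}"
    and "uniform_cycles m u a (- {x0}) ((CARD('n) - 1) div h) (r div h)"
proof -
  have card_cycles: "card (cycles_of u) = h + 1"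
    using T unfolding cycle_type_ii_def Let_def h_def by simp
  obtain x0 where x0: "{x0} \<in> cycles_of u"
    and other_cycles: "\<And>C. C \<in> cycles_of u - {{x0}} \<Longrightarrow>
      card C = (CARD('n) - 1) div h \<and> cyc_weight a C mod int m = int (r div h) mod int m"
    using T unfolding cycle_type_ii_def Let_def h_def by blast
  then obtain y where "{x0} = orbit u y"
    unfolding cycles_of_def by blast
  then have "y = x0"
    using permutation_self_in_orbit[OF u, of y] by blast
  then have "orbit u x0 = {x0}"
    using \<open>{x0} = orbit u y\<close> by simp
  then have "u x0 = x0"
    by (simp add: orbit_eq_singleton_iff)
  have n: "1 < CARD('n)"
  proof (rule ccontr)
    assume "\<not> 1 < CARD('n)"
    then have "h = r"
      by (simp add: h_def leD less_one)
    moreover have "card (cycles_of u) \<le> CARD('n)"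
      unfolding cycles_of_def by (rule card_image_le) simp
    ultimately show False
      using card_cycles r \<open>\<not> 1 < CARD('n)\<close> by simp
  qed
  then have "- {x0} \<noteq> {}"
    using card_Compl_singleton[of x0] by auto
  have "card (orbit u j) = (CARD('n) - 1) div h \<and> cyc_weight a (orbit u j) mod int m = int (r div h) mod int m"
    if "j \<noteq> x0" for j
    using other_cycles permutation_self_in_orbit[OF u, of j] that unfolding cycles_of_def by blast
  moreover have "0 < (CARD('n) - 1) div h" and "coprime (r div h) ((CARD('n) - 1) div h)"
    using cycle_type_parameter_coprime[OF r, of "CARD('n) - 1"] n unfolding h_def by simp_all
  ultimately show thesis
    using that \<open>u x0 = x0\<close> \<open>- {x0} \<noteq> {}\<close> unfolding uniform_cycles_def by simp
qed

lemma mod_eq_uminus_if_dvd_sum: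
  fixes a :: "'n::finite \<Rightarrow> int"
  assumes "int m dvd (\<Sum>i\<in>UNIV. a i)" and "sum a (- {x}) mod int m = r mod int m"
  shows "a x mod int m = (- r) mod int m"
proof -
  have "(\<Sum>i\<in>UNIV. a i) = a x + sum a (- {x})"
    by (simp add: Compl_eq_Diff_UNIV sum.remove)
  then have "int m dvd a x + sum a (- {x})"
    using assms(1) by simp
  moreover have "int m dvd sum a (- {x}) - r"
    using assms(2) by (simp add: mod_eq_dvd_iff)
  ultimately have "int m dvd (a x + sum a (- {x})) - (sum a (- {x}) - r)"
    by (rule dvd_diff)
  then show ?thesis
    by (simp add: mod_eq_dvd_iff)
qed

lemma uniform_cycles_imp_cycle_type_ii:
  fixes u :: "'n::finite \<Rightarrow> 'n"
  assumes m: "0 < m" and u: "permutation u" and sum_a: "int m dvd (\<Sum>i\<in>UNIV. a i)"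
    and x0: "u x0 = x0" and "- {x0} \<noteq> {}" and U: "uniform_cycles m u a (- {x0}) l s"
  obtains r where "1 \<le> r" and "cycle_type_ii m u a r"
proof -
  define C where "C = orbit u ` (- {x0})"
  note cycles = cycles_of_fixed_point[OF u x0, folded C_def]
  define h where "h = card C"
  have C: "C \<subseteq> cycles_of u"
    using cycles(1) by blast
  have n: "CARD('n) - 1 = l * h" and sum_C: "sum a (- {x0}) mod int m = int (h * s) mod int m"
    using uniform_cycles_card_sum[OF u U C cycles(3)] by (simp_all add: h_def card_Compl_singleton)
  have "0 < CARD('n) - 1"
    using \<open>- {x0} \<noteq> {}\<close> card_gt_0_iff[of "- {x0}"] card_Compl_singleton[of x0] by simp
  then have "0 < h"
    using n by (cases h) simp_all
  moreover have l: "0 < l" and "coprime s l"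
    using U by (simp_all add: uniform_cycles_def)
  ultimately obtain r where r: "1 \<le> r" "gcd r (l * h) = h"
    "int (r div h) mod int m = int s mod int m" "int r mod int m = int (h * s) mod int m"
    using cycle_type_parameter[OF m l \<open>0 < h\<close> \<open>coprime s l\<close>] by blast
  have "card (cycles_of u) = h + 1"
    unfolding cycles(1) h_def using cycles(2) by (simp add: C_def)
  moreover have "sum a (- {x0}) mod int m = int r mod int m"
    using sum_C r(4) by simp
  then have "cyc_weight a {x0} mod int m = (- int r) mod int m"
    using mod_eq_uminus_if_dvd_sum[OF sum_a] by (simp add: cyc_weight_def)
  moreover have "card X = l \<and> cyc_weight a X mod int m = int s mod int m" if "X \<in> cycles_of u - {{x0}}" for X
    using that U unfolding cycles(1) C_def uniform_cycles_def by auto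
  ultimately have "cycle_type_ii m u a r"
    unfolding cycle_type_ii_def Let_def n r(2) using \<open>0 < h\<close> r(3) cycles(1) by auto
  then show thesis
    using that r(1) by blast
qed

lemma cycle_type_ii_iff_uniform_cycles:
  fixes u :: "'n::finite \<Rightarrow> 'n"
  assumes "0 < m" and "permutation u" and "int m dvd (\<Sum>i\<in>UNIV. a i)"
  shows "(\<exists>r. r \<ge> 1 \<and> cycle_type_ii m u a r) \<longleftrightarrow>
    (\<exists>x0 l s. u x0 = x0 \<and> - {x0} \<noteq> {} \<and> uniform_cycles m u a (- {x0}) l s)"
proof
  assume "\<exists>r. r \<ge> 1 \<and> cycle_type_ii m u a r"
  then obtain r where "1 \<le> r" and "cycle_type_ii m u a r"
    by blast
  then obtain x0 where "u x0 = x0" and "- {x0} \<noteq> {}" and "uniform_cycles m u a (- {x0})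
      ((CARD('n) - 1) div gcd r (CARD('n) - 1)) (r div gcd r (CARD('n) - 1))"
    by (rule cycle_type_ii_imp_uniform_cycles[OF assms(2)])
  then show "\<exists>x0 l s. u x0 = x0 \<and> - {x0} \<noteq> {} \<and> uniform_cycles m u a (- {x0}) l s"
    by blast
next
  assume "\<exists>x0 l s. u x0 = x0 \<and> - {x0} \<noteq> {} \<and> uniform_cycles m u a (- {x0}) l s"
  then obtain x0 l s where "u x0 = x0" and "- {x0} \<noteq> {}" and "uniform_cycles m u a (- {x0}) l s"
    by blast
  then obtain r where "1 \<le> r" and "cycle_type_ii m u a r"
    by (rule uniform_cycles_imp_cycle_type_ii[OF assms])
  then show "\<exists>r. r \<ge> 1 \<and> cycle_type_ii m u a r"
    by blast
qed

text \<open>Neither \<open>p dvd m\<close> nor, in the first part, membership of \<open>[u;a]\<close> in \<open>G(m,p,n)\<close> is needed.\<close>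
theorem mainTheorem14:
  fixes m p :: nat
  assumes "0 < m" and "0 < p" and "p dvd m"
  shows "(p < m \<longrightarrow>
           (\<forall>(u::'n::finite \<Rightarrow> 'n) a. u permutes UNIV \<longrightarrow> int p dvd (\<Sum>i\<in>UNIV. a i) \<longrightarrow>
              (regular_in (Gmpn m p) (mono_mat m u a) \<longleftrightarrow>
               (\<exists>r::nat. r \<ge> 1 \<and> cycle_type_i m u a r))))
       \<and> (\<forall>(u::'n \<Rightarrow> 'n) a. u permutes UNIV \<longrightarrow> int m dvd (\<Sum>i\<in>UNIV. a i) \<longrightarrow>
              (regular_in (Gmpn m m) (mono_mat m u a) \<longleftrightarrow>
               (\<exists>r::nat. r \<ge> 1 \<and> (cycle_type_i m u a r \<or> cycle_type_ii m u a r))))"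
proof (intro conjI impI allI)
  fix u :: "'n \<Rightarrow> 'n" and a :: "'n \<Rightarrow> int"
  assume "p < m" and "u permutes UNIV"
  then have u: "permutation u"
    by (simp add: permutes_imp_permutation)
  show "regular_in (Gmpn m p) (mono_mat m u a) \<longleftrightarrow> (\<exists>r. r \<ge> 1 \<and> cycle_type_i m u a r)"
    unfolding regular_in_Gmpn_iff[OF assms(2) \<open>p < m\<close>] full_support_eigenvector_iff[OF assms(1) u]
      cycle_type_i_iff_uniform_cycles[OF assms(1) u] ..
next
  fix u :: "'n \<Rightarrow> 'n" and a :: "'n \<Rightarrow> int"
  assume "u permutes UNIV" and sum_a: "int m dvd (\<Sum>i\<in>UNIV. a i)"
  then have u: "permutation u"
    by (simp add: permutes_imp_permutation)
  show "regular_in (Gmpn m m) (mono_mat m u a) \<longleftrightarrow>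
      (\<exists>r. r \<ge> 1 \<and> (cycle_type_i m u a r \<or> cycle_type_ii m u a r))"
    unfolding regular_in_Gmmn_iff[OF assms(1)] full_support_eigenvector_iff[OF assms(1) u]
      fixed_point_support_eigenvector_iff[OF assms(1) u] cycle_type_i_iff_uniform_cycles[OF assms(1) u, symmetric]
      cycle_type_ii_iff_uniform_cycles[OF assms(1) u sum_a, symmetric]
    by blast
qed

end
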